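(* Consider the DRV process with choice function $k(n)\to\infty$. Then $\mathbb{E}[D_0(\lfloor n/2\rfloor)] = O\!\left(\frac{n}{k(n)}\right)$, where $D_0(t)$ denotes the number of vertices of degree $0$ after $t$ edges have been added.
   Context: The DRV process (Degree Rule with Varying Choice): fix a function $k=k(n)$ with $2\le k(n)\le n$. Start at time $t=0$ with $n$ isolated vertices and no edges. At each time step $t=0,1,2,\dots$ (one edge is added per step, so after $t$ steps the graph has $t$ edges; multiple edges are allowed), independently of the past choose a set $V_t$ of $k(n)$ distinct vertices uniformly at random, and let $V_{t,d}$ be the set of vertices in $V_t$ whose current degree is $d$. If $|V_{t,0}|\ge 2$, add an edge between two vertices of $V_{t,0}$ sampled uniformly at random without replacement; otherwise, if $|V_{t,1}|\ge 2$, add an edge between two vertices of $V_{t,1}$ sampled uniformly at random without replacement; otherwise add an edge between two vertices of $V_t$ sampled uniformly at random without replacement. $D_i(t)$ is the number of vertices of degree $i$ after $t$ steps. *)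

theory Defs
  imports "HOL-Probability.Probability" "HOL-Library.Landau_Symbols"
begin

text \<open>A multigraph on the vertex set {0..<n} is represented by the list of its edges
  (most recent edge first); multiple edges are allowed.\<close>
type_synonym mgraph = "(nat \<times> nat) list"

definition degree :: "mgraph \<Rightarrow> nat \<Rightarrow> nat" where
  "degree G v = length (filter (\<lambda>e. fst e = v) G) + length (filter (\<lambda>e. snd e = v) G)"

definition Dcount :: "nat \<Rightarrow> nat \<Rightarrow> mgraph \<Rightarrow> nat" where
  "Dcount n i G = card {v \<in> {..<n}. degree G v = i}"

text \<open>Uniform pair of distinct vertices from W (ordered pairs uniform = unordered pair
  sampled uniformly without replacement).\<close>
definition distinct_pairs :: "nat set \<Rightarrow> (nat \<times> nat) set" where
  "distinct_pairs W = {(a, b). a \<in> W \<and> b \<in> W \<and> a \<noteq> b}"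

definition drv_step :: "nat \<Rightarrow> nat \<Rightarrow> mgraph \<Rightarrow> mgraph pmf" where
  "drv_step n k G =
     pmf_of_set {S. S \<subseteq> {..<n} \<and> card S = k} \<bind> (\<lambda>V.
       let V0 = {v \<in> V. degree G v = 0};
           V1 = {v \<in> V. degree G v = 1};
           W = (if card V0 \<ge> 2 then V0 else if card V1 \<ge> 2 then V1 else V)
       in pmf_of_set (distinct_pairs W) \<bind> (\<lambda>e. return_pmf (e # G)))"

fun drv :: "nat \<Rightarrow> nat \<Rightarrow> nat \<Rightarrow> mgraph pmf" where
  "drv n k 0 = return_pmf []"
| "drv n k (Suc t) = drv n k t \<bind> drv_step n k"

end

theory Submission
  imports Defs
begin

text \<open>Let \<open>x\<close> be the number of isolated vertices and \<open>r = exp (-k/n)\<close>. A uniform \<open>k\<close>-set of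
  vertices contains fewer than two of the \<open>x\<close> isolated vertices with probability at most
  \<open>2 r ^ (x div 2)\<close>; otherwise the new edge joins two isolated vertices and \<open>x\<close> drops by 2.
  The potential \<open>x/2 + 4 \<Sum>i<x div 2. r^i\<close> never increases, and while \<open>x > 4n/k + 3\<close> it drops
  by at least 1 in expectation: the geometric term pays for the rare steps that fail.
  Since the potential starts at most at \<open>n/2 + 8n/k\<close>, after \<open>n/2\<close> steps its expectation,
  and with it that of \<open>x/2\<close>, is \<open>O(n/k)\<close>.\<close>

lemma expectation_bind_pmf_bounded:
  fixes f :: "'b \<Rightarrow> real"
  assumes "\<And>x. \<bar>f x\<bar> \<le> B"
  shows "measure_pmf.expectation (p \<bind> q) f
           = measure_pmf.expectation p (\<lambda>x. measure_pmf.expectation (q x) f)"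
  unfolding measure_pmf_bind
  by (rule integral_bind[where K="count_space UNIV" and B=B and B'=1])
     (auto simp: assms measure_pmf_in_subprob_algebra prob_space_imp_subprob_space
        measure_pmf.prob_space_axioms measure_pmf.emeasure_space_1)

lemma expectation_mono_set_pmf:
  fixes f g :: "'b \<Rightarrow> real"
  assumes "\<And>x. \<bar>f x\<bar> \<le> B" "\<And>x. \<bar>g x\<bar> \<le> B'" "\<And>x. x \<in> set_pmf p \<Longrightarrow> f x \<le> g x"
  shows "measure_pmf.expectation p f \<le> measure_pmf.expectation p g"
proof (rule integral_mono_AE)
  show "integrable (measure_pmf p) f"
    by (rule measure_pmf.integrable_const_bound[where B=B]) (auto simp: assms)
  show "integrable (measure_pmf p) g"
    by (rule measure_pmf.integrable_const_bound[where B=B']) (auto simp: assms)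
  show "AE x in measure_pmf p. f x \<le> g x"
    using assms(3) by (simp add: AE_measure_pmf_iff)
qed

lemma expectation_le_const_set_pmf:
  fixes f :: "'b \<Rightarrow> real"
  assumes "\<And>x. \<bar>f x\<bar> \<le> B" "\<And>x. x \<in> set_pmf p \<Longrightarrow> f x \<le> c"
  shows "measure_pmf.expectation p f \<le> c"
  using expectation_mono_set_pmf[of f B "\<lambda>_. c" "\<bar>c\<bar>" p] assms by simp

lemma abs_expectation_le_bound:
  fixes f :: "'b \<Rightarrow> real"
  assumes "\<And>x. \<bar>f x\<bar> \<le> B"
  shows "\<bar>measure_pmf.expectation p f\<bar> \<le> B"
proof -
  have "\<bar>measure_pmf.expectation p f\<bar> \<le> measure_pmf.expectation p (\<lambda>x. \<bar>f x\<bar>)"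
    by (rule integral_abs_bound)
  also have "\<dots> \<le> B"
    by (rule expectation_le_const_set_pmf[of _ B]) (auto intro: assms)
  finally show ?thesis .
qed

lemma expectation_diff_const:
  fixes f :: "'b \<Rightarrow> real"
  assumes "\<And>x. \<bar>f x\<bar> \<le> B"
  shows "measure_pmf.expectation p (\<lambda>x. f x - c) = measure_pmf.expectation p f - c"
proof -
  have "integrable (measure_pmf p) f"
    by (rule measure_pmf.integrable_const_bound[where B=B]) (auto simp: assms)
  then show ?thesis by (subst Bochner_Integration.integral_diff) auto
qed

section \<open>Random \<open>k\<close>-subsets\<close>

lemma Suc_times_binomial_Suc: "Suc k * (n choose Suc k) = (n - k) * (n choose k)"
  by (metis binomial_absorption binomial_absorb_comp)

lemma binomial_mult_power_le:
  assumes "a \<le> n"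
  shows "(a choose k) * n ^ k \<le> (n choose k) * a ^ k"
proof (induction k)
  case 0
  show ?case by simp
next
  case (Suc k)
  have "(a - k) * n \<le> (n - k) * a"
    using assms by (smt (verit) diff_le_mono2 diff_mult_distrib mult.commute nat_mult_le_cancel_disj)
  then have "((a choose k) * n ^ k) * ((a - k) * n) \<le> ((n choose k) * a ^ k) * ((n - k) * a)"
    by (rule mult_le_mono[OF Suc.IH])
  then have "Suc k * ((a choose Suc k) * n ^ Suc k) \<le> Suc k * ((n choose Suc k) * a ^ Suc k)"
    by (simp only: mult.assoc[symmetric] Suc_times_binomial_Suc) (simp add: ac_simps)
  then show ?case by (rule Suc_mult_le_cancel1[THEN iffD1])
qed

definition ksubsets :: "'a set \<Rightarrow> nat \<Rightarrow> 'a set set" where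
  "ksubsets A k = {V. V \<subseteq> A \<and> card V = k}"

lemma finite_ksubsets: "finite A \<Longrightarrow> finite (ksubsets A k)"
  unfolding ksubsets_def by (rule finite_subset[of _ "Pow A"]) auto

lemma card_ksubsets: "finite A \<Longrightarrow> card (ksubsets A k) = card A choose k"
  unfolding ksubsets_def by (rule n_subsets)

lemma ksubsets_nonempty: "finite A \<Longrightarrow> k \<le> card A \<Longrightarrow> ksubsets A k \<noteq> {}"
  using obtain_subset_with_card_n[of k A] by (auto simp: ksubsets_def)

lemma card_ksubsets_Diff_le:
  assumes "finite A" "Y \<subseteq> A"
  shows "real (card (ksubsets (A - Y) k))
           \<le> real (card (ksubsets A k)) * exp (- real k / real (card A)) ^ card Y"
proof (cases "A = {}")
  case True
  then show ?thesis using assms by simp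
next
  case False
  define n y where "n = card A" and "y = card Y"
  have n0: "0 < n" using False assms(1) by (simp add: n_def card_gt_0_iff)
  have yn: "y \<le> n" using assms by (simp add: n_def y_def card_mono)
  have "real (card (ksubsets (A - Y) k)) = real ((n - y) choose k)"
    using assms by (simp add: card_ksubsets card_Diff_subset finite_subset n_def y_def)
  also have "\<dots> \<le> real (n choose k) * (real (n - y) / real n) ^ k"
  proof -
    have "real ((n - y) choose k) * real n ^ k \<le> real (n choose k) * real (n - y) ^ k"
      using binomial_mult_power_le[of "n - y" n k] by (metis diff_le_self of_nat_le_iff of_nat_mult of_nat_power)
    then show ?thesis using n0 by (simp add: power_divide field_simps)
  qed
  also have "\<dots> \<le> real (n choose k) * exp (- real y / real n) ^ k"
  proof (intro mult_left_mono power_mono)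
    have "real (n - y) / real n = 1 + (- real y / real n)"
      using yn n0 by (simp add: of_nat_diff field_simps)
    then show "real (n - y) / real n \<le> exp (- real y / real n)"
      using exp_ge_add_one_self by metis
  qed auto
  also have "\<dots> = real (n choose k) * exp (- real k / real n) ^ y"
    by (simp add: exp_of_nat_mult[symmetric] algebra_simps)
  finally show ?thesis using assms(1) by (simp add: card_ksubsets n_def y_def)
qed

lemma card_ksubsets_meeting_less_two_le:
  assumes "finite A" "Z \<subseteq> A"
  shows "real (card {V \<in> ksubsets A k. card (V \<inter> Z) < 2})
           \<le> 2 * real (card (ksubsets A k)) * exp (- real k / real (card A)) ^ (card Z div 2)"
proof -
  define y where "y = card Z div 2"
  have finZ: "finite Z" using assms finite_subset by blast
  obtain Z1 where Z1: "Z1 \<subseteq> Z" "card Z1 = y"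
    using obtain_subset_with_card_n[of y Z] by (metis div_le_dividend y_def)
  have "y \<le> card (Z - Z1)" using Z1 finZ by (simp add: card_Diff_subset finite_subset y_def)
  then obtain Z2 where Z2: "Z2 \<subseteq> Z - Z1" "card Z2 = y"
    using obtain_subset_with_card_n by metis
  \<comment> \<open>a set meeting both halves \<open>Z1\<close> and \<open>Z2\<close> meets \<open>Z\<close> twice\<close>
  have "{V \<in> ksubsets A k. card (V \<inter> Z) < 2} \<subseteq> ksubsets (A - Z1) k \<union> ksubsets (A - Z2) k"
  proof (rule subsetI, rule ccontr)
    fix V assume V: "V \<in> {V \<in> ksubsets A k. card (V \<inter> Z) < 2}"
      and "V \<notin> ksubsets (A - Z1) k \<union> ksubsets (A - Z2) k"
    then obtain a b where "a \<in> V \<inter> Z1" "b \<in> V \<inter> Z2" by (auto simp: ksubsets_def)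
    then have "card {a, b} \<le> card (V \<inter> Z)" "a \<noteq> b"
      using Z1 Z2 finZ by (auto intro!: card_mono)
    then show False using V by simp
  qed
  then have "card {V \<in> ksubsets A k. card (V \<inter> Z) < 2}
               \<le> card (ksubsets (A - Z1) k) + card (ksubsets (A - Z2) k)"
    using assms(1) by (meson card_Un_le card_mono finite_Diff finite_UnI finite_ksubsets le_trans)
  then have "real (card {V \<in> ksubsets A k. card (V \<inter> Z) < 2})
               \<le> real (card (ksubsets (A - Z1) k)) + real (card (ksubsets (A - Z2) k))"
    by linarith
  also have "\<dots> \<le> 2 * real (card (ksubsets A k)) * exp (- real k / real (card A)) ^ y"
  proof -
    have "Z1 \<subseteq> A" "Z2 \<subseteq> A" using Z1 Z2 assms(2) by auto
    then show ?thesis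
      using card_ksubsets_Diff_le[OF assms(1), of Z1 k] card_ksubsets_Diff_le[OF assms(1), of Z2 k]
      unfolding Z1(2) Z2(2) by linarith
  qed
  finally show ?thesis unfolding y_def .
qed

lemma prob_ksubset_meeting_less_two_le:
  assumes "finite A" "Z \<subseteq> A" "k \<le> card A"
  shows "measure_pmf.prob (pmf_of_set (ksubsets A k)) {V. card (V \<inter> Z) < 2}
           \<le> 2 * exp (- real k / real (card A)) ^ (card Z div 2)"
proof -
  have pos: "0 < real (card (ksubsets A k))"
    using assms by (simp add: card_ksubsets)
  have "ksubsets A k \<inter> {V. card (V \<inter> Z) < 2} = {V \<in> ksubsets A k. card (V \<inter> Z) < 2}"
    by blast
  then show ?thesis
    using card_ksubsets_meeting_less_two_le[OF assms(1,2), of k] pos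
      ksubsets_nonempty[OF assms(1,3)] finite_ksubsets[OF assms(1)]
    by (simp add: measure_pmf_of_set pos_divide_le_eq mult_ac)
qed

definition isolated :: "nat \<Rightarrow> mgraph \<Rightarrow> nat set" where
  "isolated n G = {v \<in> {..<n}. degree G v = 0}"

lemma isolated_subset: "isolated n G \<subseteq> {..<n}"
  by (auto simp: isolated_def)

lemma Dcount_0_eq_card_isolated: "Dcount n 0 G = card (isolated n G)"
  by (simp add: Dcount_def isolated_def)

lemma degree_Cons:
  "degree ((a, b) # G) v = degree G v + (if a = v then 1 else 0) + (if b = v then 1 else 0)"
  by (simp add: degree_def)

lemma isolated_Cons: "isolated n ((a, b) # G) = isolated n G - {a, b}"
  by (auto simp: isolated_def degree_Cons)

lemma finite_isolated: "finite (isolated n G)"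
  by (simp add: isolated_def)

lemma Dcount_0_Nil: "Dcount n 0 [] = n"
  by (simp add: Dcount_def degree_def)

lemma Dcount_0_le: "Dcount n 0 G \<le> n"
  using card_mono[OF _ isolated_subset, of n G] by (simp add: Dcount_0_eq_card_isolated)

lemma Dcount_0_Cons_le: "Dcount n 0 (e # G) \<le> Dcount n 0 G"
  by (cases e) (simp add: Dcount_0_eq_card_isolated isolated_Cons card_mono finite_isolated)

lemma Dcount_0_Cons_ge: "Dcount n 0 G - 2 \<le> Dcount n 0 (e # G)"
proof (cases e)
  case (Pair a b)
  have "card (isolated n G) - card {a, b} \<le> card (isolated n G - {a, b})"
    by (rule diff_card_le_card_Diff) simp
  moreover have "card {a, b} \<le> 2" by (simp add: card_insert_le_m1)
  ultimately show ?thesis by (simp add: Pair Dcount_0_eq_card_isolated isolated_Cons)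
qed

lemma Dcount_0_Cons_isolated:
  assumes "a \<in> isolated n G" "b \<in> isolated n G" "a \<noteq> b"
  shows "Dcount n 0 ((a, b) # G) = Dcount n 0 G - 2"
  using assms by (simp add: Dcount_0_eq_card_isolated isolated_Cons card_Diff_subset finite_isolated)

definition candidates :: "mgraph \<Rightarrow> nat set \<Rightarrow> nat set" where
  "candidates G V =
     (if card {v \<in> V. degree G v = 0} \<ge> 2 then {v \<in> V. degree G v = 0}
      else if card {v \<in> V. degree G v = 1} \<ge> 2 then {v \<in> V. degree G v = 1} else V)"

definition add_edge_within :: "mgraph \<Rightarrow> nat set \<Rightarrow> mgraph pmf" where
  "add_edge_within G V = pmf_of_set (distinct_pairs (candidates G V)) \<bind> (\<lambda>e. return_pmf (e # G))"

lemma drv_step_eq: "drv_step n k G = pmf_of_set (ksubsets {..<n} k) \<bind> add_edge_within G"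
  unfolding drv_step_def ksubsets_def add_edge_within_def candidates_def Let_def ..

lemma distinct_pairs_finite_nonempty:
  assumes "finite W" "2 \<le> card W"
  shows "finite (distinct_pairs W)" "distinct_pairs W \<noteq> {}"
proof -
  show "finite (distinct_pairs W)"
    by (rule finite_subset[of _ "W \<times> W"]) (auto simp: distinct_pairs_def assms)
  obtain T where "T \<subseteq> W" "card T = 2"
    using obtain_subset_with_card_n[of 2 W] assms by auto
  then show "distinct_pairs W \<noteq> {}"
    by (auto simp: distinct_pairs_def card_2_iff)
qed

lemma set_pmf_add_edge_within:
  assumes "finite V" "2 \<le> card V" "G' \<in> set_pmf (add_edge_within G V)"
  obtains a b where "(a, b) \<in> distinct_pairs (candidates G V)" "G' = (a, b) # G"
proof -
  have "finite (candidates G V)" "2 \<le> card (candidates G V)"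
    using assms(1,2) by (auto simp: candidates_def)
  from distinct_pairs_finite_nonempty[OF this] assms(3) show ?thesis
    using that by (auto simp: add_edge_within_def)
qed

lemma Dcount_0_add_edge_within:
  assumes "V \<subseteq> {..<n}" "2 \<le> card (V \<inter> isolated n G)" "G' \<in> set_pmf (add_edge_within G V)"
  shows "Dcount n 0 G' = Dcount n 0 G - 2"
proof -
  have "finite V" using assms(1) finite_subset by blast
  moreover have "2 \<le> card V" using assms(2) card_mono[OF \<open>finite V\<close>, of "V \<inter> isolated n G"] by simp
  ultimately obtain u v where uv: "(u, v) \<in> distinct_pairs (candidates G V)" "G' = (u, v) # G"
    using set_pmf_add_edge_within assms(3) by blast
  have "{w \<in> V. degree G w = 0} = V \<inter> isolated n G"
    using assms(1) by (auto simp: isolated_def)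
  then have "candidates G V = V \<inter> isolated n G"
    using assms(2) by (simp add: candidates_def)
  then have "u \<in> isolated n G" "v \<in> isolated n G" "u \<noteq> v"
    using uv(1) by (auto simp: distinct_pairs_def)
  then show ?thesis by (simp add: uv(2) Dcount_0_Cons_isolated)
qed

lemma set_pmf_drv_step:
  assumes "2 \<le> k" "k \<le> n" "G' \<in> set_pmf (drv_step n k G)"
  obtains e where "G' = e # G"
proof -
  have "finite (ksubsets {..<n} k)" "ksubsets {..<n} k \<noteq> {}"
    using assms(2) ksubsets_nonempty[of "{..<n}" k] by (auto intro: finite_ksubsets)
  then obtain V where "V \<in> ksubsets {..<n} k" "G' \<in> set_pmf (add_edge_within G V)"
    using assms(3) by (auto simp: drv_step_eq)
  then show ?thesis
    using set_pmf_add_edge_within[of V G' G] assms(1) that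
    by (auto simp: ksubsets_def intro: finite_subset)
qed

lemma Dcount_0_drv_ge:
  assumes "2 \<le> k" "k \<le> n" "G \<in> set_pmf (drv n k t)"
  shows "n - 2 * t \<le> Dcount n 0 G"
  using assms(3)
proof (induction t arbitrary: G)
  case 0
  then show ?case by (simp add: Dcount_0_Nil)
next
  case (Suc t)
  then obtain H where H: "H \<in> set_pmf (drv n k t)" "G \<in> set_pmf (drv_step n k H)"
    by auto
  then obtain e where "G = e # H" using set_pmf_drv_step assms(1,2) by blast
  then have "Dcount n 0 H - 2 \<le> Dcount n 0 G" using Dcount_0_Cons_ge by simp
  then show ?case using Suc.IH[OF H(1)] by arith
qed

section \<open>A potential for the isolated vertices\<close>

lemma exp_neg_div_power_le_quarter:
  fixes j k n :: nat
  assumes "0 < k" "0 < n" "2 * real n / real k \<le> real j"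
  shows "exp (- real k / real n) ^ j \<le> 1 / 4"
proof -
  define c where "c = real j * real k / real n"
  have "2 \<le> c" using assms by (simp add: c_def field_simps)
  then have "4 \<le> c\<^sup>2" using power_mono[of 2 c 2] by simp
  then have "4 \<le> exp c" using exp_lower_Taylor_quadratic[of c] \<open>2 \<le> c\<close> by linarith
  have "exp (- real k / real n) ^ j = exp (real j * (- real k / real n))"
    by (rule exp_of_nat_mult[symmetric])
  also have "\<dots> = inverse (exp c)"
    by (simp add: c_def exp_minus[symmetric])
  also have "\<dots> \<le> 1 / 4"
    using le_imp_inverse_le[OF \<open>4 \<le> exp c\<close>] by simp
  finally show ?thesis .
qed

lemma one_minus_exp_neg_ge_half:
  fixes a :: real
  assumes "0 \<le> a" "a \<le> 1"
  shows "a / 2 \<le> 1 - exp (- a)"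
proof -
  have "exp (- a) * (1 + a) \<le> exp (- a) * exp a"
    by (intro mult_left_mono exp_ge_add_one_self) simp
  then have "exp (- a) \<le> 1 / (1 + a)"
    using assms by (simp add: exp_minus field_simps)
  also have "\<dots> \<le> 1 - a / 2"
  proof -
    have "a * a \<le> a" using assms by (simp add: mult_left_le_one_le)
    then show ?thesis using assms by (simp add: field_simps)
  qed
  finally show ?thesis by linarith
qed

definition isolation_potential :: "real \<Rightarrow> nat \<Rightarrow> real" where
  "isolation_potential r x = real x / 2 + 4 * (\<Sum>i<x div 2. r ^ i)"

lemma isolation_potential_ge: "0 \<le> r \<Longrightarrow> real x / 2 \<le> isolation_potential r x"
  unfolding isolation_potential_def by (simp add: sum_nonneg)

lemma isolation_potential_mono:
  "0 \<le> r \<Longrightarrow> x \<le> x' \<Longrightarrow> isolation_potential r x \<le> isolation_potential r x'"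
  unfolding isolation_potential_def
  by (intro add_mono divide_right_mono mult_left_mono sum_mono2) (auto intro: div_le_mono)

lemma isolation_potential_minus_two:
  assumes "2 \<le> x"
  shows "isolation_potential r x = isolation_potential r (x - 2) + 1 + 4 * r ^ (x div 2 - 1)"
proof -
  have "x div 2 = Suc ((x - 2) div 2)" "x div 2 - 1 = (x - 2) div 2" using assms by linarith+
  then show ?thesis using assms by (simp add: isolation_potential_def of_nat_diff field_simps)
qed

lemma isolation_potential_le:
  assumes "0 \<le> r" "r < 1"
  shows "isolation_potential r x \<le> real x / 2 + 4 / (1 - r)"
proof -
  have "(\<Sum>i<x div 2. r ^ i) = (1 - r ^ (x div 2)) / (1 - r)"
    using assms by (simp add: sum_gp_strict)
  also have "\<dots> \<le> 1 / (1 - r)"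
    using assms by (intro divide_right_mono) auto
  finally show ?thesis by (simp add: isolation_potential_def)
qed

lemma isolation_potential_exp_le:
  assumes "0 < k" "k \<le> n"
  shows "isolation_potential (exp (- real k / real n)) x \<le> real x / 2 + 8 * (real n / real k)"
proof -
  define r where "r = exp (- real k / real n)"
  have gap: "real k / real n / 2 \<le> 1 - r"
    unfolding r_def using one_minus_exp_neg_ge_half[of "real k / real n"] assms by simp
  then have r: "0 \<le> r" "r < 1"
    using assms by (auto simp: r_def)
  have "4 / (1 - r) \<le> 4 / (real k / real n / 2)"
    using gap assms r by (intro divide_left_mono mult_pos_pos) auto
  also have "\<dots> = 8 * (real n / real k)"
    using assms by simp
  finally show ?thesis
    using isolation_potential_le[OF r, of x] by (simp add: r_def)
qed

definition drv_potential :: "nat \<Rightarrow> nat \<Rightarrow> mgraph \<Rightarrow> real" where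
  "drv_potential n k G = isolation_potential (exp (- real k / real n)) (Dcount n 0 G)"

lemma abs_drv_potential_le:
  "\<bar>drv_potential n k G\<bar> \<le> isolation_potential (exp (- real k / real n)) n"
proof -
  let ?r = "exp (- real k / real n)"
  have "0 \<le> isolation_potential ?r (Dcount n 0 G)"
    using isolation_potential_ge[of ?r "Dcount n 0 G"] by simp
  moreover have "isolation_potential ?r (Dcount n 0 G) \<le> isolation_potential ?r n"
    by (rule isolation_potential_mono[OF _ Dcount_0_le]) simp
  ultimately show ?thesis by (simp add: drv_potential_def)
qed

lemma drv_potential_Cons_le: "drv_potential n k (e # G) \<le> drv_potential n k G"
  by (simp add: drv_potential_def isolation_potential_mono Dcount_0_Cons_le)

lemma expectation_drv_step_potential_le_self:
  assumes "2 \<le> k" "k \<le> n"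
  shows "measure_pmf.expectation (drv_step n k G) (drv_potential n k) \<le> drv_potential n k G"
proof (rule expectation_le_const_set_pmf[OF abs_drv_potential_le])
  fix G' assume "G' \<in> set_pmf (drv_step n k G)"
  then obtain e where "G' = e # G" using set_pmf_drv_step[OF assms] by blast
  then show "drv_potential n k G' \<le> drv_potential n k G" by (simp add: drv_potential_Cons_le)
qed

lemma expectation_add_edge_within_potential_le:
  assumes "V \<subseteq> {..<n}" "2 \<le> card V"
  shows "measure_pmf.expectation (add_edge_within G V) (drv_potential n k)
           \<le> (if card (V \<inter> isolated n G) < 2 then drv_potential n k G
               else isolation_potential (exp (- real k / real n)) (Dcount n 0 G - 2))"
proof (rule expectation_le_const_set_pmf[OF abs_drv_potential_le])
  fix G' assume G': "G' \<in> set_pmf (add_edge_within G V)"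
  have "finite V" using assms(1) finite_subset by blast
  then obtain u v where "G' = (u, v) # G"
    using set_pmf_add_edge_within[OF _ assms(2) G'] by metis
  then show "drv_potential n k G' \<le> (if card (V \<inter> isolated n G) < 2 then drv_potential n k G
               else isolation_potential (exp (- real k / real n)) (Dcount n 0 G - 2))"
    using drv_potential_Cons_le[of n k "(u, v)" G] Dcount_0_add_edge_within[OF assms(1) _ G']
    by (simp add: drv_potential_def)
qed

lemma expectation_drv_step_potential_le:
  fixes n k :: nat and G :: mgraph
  assumes "2 \<le> k" "k \<le> n"
  defines "r \<equiv> exp (- real k / real n)" and "x \<equiv> Dcount n 0 G"
    and "p \<equiv> measure_pmf.prob (pmf_of_set (ksubsets {..<n} k)) {V. card (V \<inter> isolated n G) < 2}"
  shows "measure_pmf.expectation (drv_step n k G) (drv_potential n k)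
           \<le> isolation_potential r (x - 2)
              + p * (isolation_potential r x - isolation_potential r (x - 2))"
proof -
  define S where "S = ksubsets {..<n} k"
  define bad where "bad = {V. card (V \<inter> isolated n G) < 2}"
  define a c where "a = isolation_potential r (x - 2)"
    and "c = isolation_potential r x - isolation_potential r (x - 2)"
  have S: "finite S" "S \<noteq> {}"
    using assms(2) ksubsets_nonempty[of "{..<n}" k] by (auto simp: S_def finite_ksubsets)
  have "measure_pmf.expectation (drv_step n k G) (drv_potential n k)
          = measure_pmf.expectation (pmf_of_set S)
              (\<lambda>V. measure_pmf.expectation (add_edge_within G V) (drv_potential n k))"
    unfolding drv_step_eq S_def by (rule expectation_bind_pmf_bounded[OF abs_drv_potential_le])
  also have "\<dots> \<le> measure_pmf.expectation (pmf_of_set S) (\<lambda>V. a + indicator bad V * c)"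
  proof (rule expectation_mono_set_pmf)
    show "\<bar>measure_pmf.expectation (add_edge_within G V) (drv_potential n k)\<bar>
            \<le> isolation_potential r n" for V
      unfolding r_def by (rule abs_expectation_le_bound[OF abs_drv_potential_le])
    show "\<bar>a + indicator bad V * c\<bar> \<le> \<bar>a\<bar> + \<bar>c\<bar>" for V
      by (simp add: indicator_def abs_triangle_ineq)
    fix V assume "V \<in> set_pmf (pmf_of_set S)"
    then have "V \<subseteq> {..<n}" "2 \<le> card V"
      using S assms(1) by (auto simp: S_def ksubsets_def)
    from expectation_add_edge_within_potential_le[OF this, of G k]
    show "measure_pmf.expectation (add_edge_within G V) (drv_potential n k)
            \<le> a + indicator bad V * c"
      by (simp add: bad_def a_def c_def drv_potential_def r_def x_def split: if_splits)
  qed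
  also have "\<dots> = a + measure_pmf.expectation (pmf_of_set S) (\<lambda>V. indicator bad V * c)"
    by (subst Bochner_Integration.integral_add) (simp_all add: integrable_measure_pmf_finite S)
  also have "\<dots> = a + p * c"
    by (simp add: p_def S_def bad_def)
  finally show ?thesis by (simp add: a_def c_def)
qed

lemma expectation_drv_step_potential_drift:
  assumes "2 \<le> k" "k \<le> n" "4 * real n / real k + 3 < real (Dcount n 0 G)"
  shows "measure_pmf.expectation (drv_step n k G) (drv_potential n k) \<le> drv_potential n k G - 1"
proof -
  define r x where "r = exp (- real k / real n)" and "x = Dcount n 0 G"
  define s where "s = r ^ (x div 2 - 1)"
  define p where "p = measure_pmf.prob (pmf_of_set (ksubsets {..<n} k)) {V. card (V \<inter> isolated n G) < 2}"
  have "0 \<le> 4 * real n / real k" by simp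
  then have "3 < real x" using assms(3) unfolding x_def by linarith
  then have x2: "2 \<le> x" by simp
  have s_nonneg: "0 \<le> s" by (simp add: s_def r_def)
  have "real x \<le> 2 * real (x div 2) + 1" by linarith
  then have "2 * real n / real k \<le> real (x div 2 - 1)"
    using assms(3) x2 by (simp add: x_def of_nat_diff)
  then have s_le: "s \<le> 1 / 4"
    unfolding s_def r_def using assms(1,2) by (intro exp_neg_div_power_le_quarter) auto
  have "p \<le> 2 * r ^ (x div 2)"
    using prob_ksubset_meeting_less_two_le[of "{..<n}" "isolated n G" k] isolated_subset assms(2)
    by (simp add: p_def r_def x_def Dcount_0_eq_card_isolated)
  also have "\<dots> \<le> 2 * s"
    unfolding s_def r_def by (intro mult_left_mono power_decreasing) auto
  finally have p_le: "p \<le> 2 * s" .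
  have "measure_pmf.expectation (drv_step n k G) (drv_potential n k)
          \<le> isolation_potential r (x - 2) + p * (1 + 4 * s)"
    using expectation_drv_step_potential_le[OF assms(1,2), of G] isolation_potential_minus_two[OF x2, of r]
    by (simp add: r_def x_def p_def s_def)
  also have "\<dots> \<le> isolation_potential r (x - 2) + 2 * s * (1 + 4 * s)"
    using p_le s_nonneg by (intro add_left_mono mult_right_mono) auto
  also have "\<dots> \<le> isolation_potential r (x - 2) + 4 * s"
  proof -
    have "s * (4 * s) \<le> s * 1" using s_le s_nonneg by (intro mult_left_mono) auto
    then show ?thesis by (simp add: algebra_simps)
  qed
  also have "\<dots> = drv_potential n k G - 1"
    using isolation_potential_minus_two[OF x2, of r] by (simp add: drv_potential_def r_def x_def s_def)
  finally show ?thesis .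
qed

lemma expectation_drv_potential_le:
  assumes "2 \<le> k" "k \<le> n"
  defines "m \<equiv> 4 * real n / real k + 3"
  shows "measure_pmf.expectation (drv n k t) (drv_potential n k)
           \<le> isolation_potential (exp (- real k / real n)) n - min (real t) ((real n - m) / 2)"
proof (induction t)
  case 0
  show ?case by (simp add: drv_potential_def Dcount_0_Nil)
next
  case (Suc t)
  define c :: real where "c = (if real t < (real n - m) / 2 then 1 else 0)"
  have step: "measure_pmf.expectation (drv_step n k G) (drv_potential n k) \<le> drv_potential n k G - c"
    if G: "G \<in> set_pmf (drv n k t)" for G
  proof (cases "real t < (real n - m) / 2")
    case True
    \<comment> \<open>until then at least \<open>n - 2t > m\<close> vertices are still isolated\<close>
    have "real n - 2 * real t \<le> real (n - 2 * t)" by linarith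
    also have "\<dots> \<le> real (Dcount n 0 G)" using Dcount_0_drv_ge[OF assms(1,2) G] by simp
    moreover have "2 * real t < real n - m" using True by simp
    ultimately have "m < real (Dcount n 0 G)" by linarith
    then show ?thesis
      using expectation_drv_step_potential_drift[OF assms(1,2)] True by (simp add: c_def m_def)
  next
    case False
    then show ?thesis using expectation_drv_step_potential_le_self[OF assms(1,2)] by (simp add: c_def)
  qed
  have "measure_pmf.expectation (drv n k (Suc t)) (drv_potential n k)
          = measure_pmf.expectation (drv n k t)
              (\<lambda>G. measure_pmf.expectation (drv_step n k G) (drv_potential n k))"
    by (simp only: drv.simps) (rule expectation_bind_pmf_bounded[OF abs_drv_potential_le])
  also have "\<dots> \<le> measure_pmf.expectation (drv n k t) (\<lambda>G. drv_potential n k G - c)"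
  proof (rule expectation_mono_set_pmf[OF abs_expectation_le_bound[OF abs_drv_potential_le] _ step])
    show "\<bar>drv_potential n k G - c\<bar> \<le> isolation_potential (exp (- real k / real n)) n + 1" for G
      using abs_drv_potential_le[of n k G] by (auto simp: c_def)
  qed
  also have "\<dots> = measure_pmf.expectation (drv n k t) (drv_potential n k) - c"
    by (rule expectation_diff_const[OF abs_drv_potential_le])
  also have "\<dots> \<le> isolation_potential (exp (- real k / real n)) n - min (real (Suc t)) ((real n - m) / 2)"
    using Suc.IH by (auto simp: c_def)
  finally show ?case .
qed

lemma expectation_Dcount_0_drv_half_le:
  assumes "2 \<le> k" "k \<le> n"
  shows "measure_pmf.expectation (drv n k (n div 2)) (\<lambda>G. real (Dcount n 0 G)) \<le> 24 * (real n / real k)"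
proof -
  define r m q where "r = exp (- real k / real n)" and "m = 4 * real n / real k + 3"
    and "q = real n / real k"
  have r: "0 \<le> r" by (simp add: r_def)
  have "measure_pmf.expectation (drv n k (n div 2)) (\<lambda>G. real (Dcount n 0 G))
          \<le> measure_pmf.expectation (drv n k (n div 2)) (\<lambda>G. 2 * drv_potential n k G)"
  proof (rule expectation_mono_set_pmf)
    show "\<bar>real (Dcount n 0 G)\<bar> \<le> real n" for G using Dcount_0_le[of n G] by simp
    show "\<bar>2 * drv_potential n k G\<bar> \<le> 2 * isolation_potential r n" for G
      using abs_drv_potential_le[of n k G] by (simp add: r_def)
    show "real (Dcount n 0 G) \<le> 2 * drv_potential n k G" for G
      using isolation_potential_ge[OF r, of "Dcount n 0 G"] unfolding drv_potential_def r_def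
      by linarith
  qed
  also have "\<dots> = 2 * measure_pmf.expectation (drv n k (n div 2)) (drv_potential n k)"
    by simp
  also have "\<dots> \<le> 2 * (isolation_potential r n - min (real (n div 2)) ((real n - m) / 2))"
    using expectation_drv_potential_le[OF assms, of "n div 2"] by (simp add: r_def m_def)
  also have "\<dots> \<le> 2 * (real n / 2 + 8 * q - (real n - m - 1) / 2)"
  proof -
    have "real n \<le> 2 * real (n div 2) + 1" by linarith
    moreover have "0 \<le> m" by (simp add: m_def)
    ultimately have "(real n - m - 1) / 2 \<le> min (real (n div 2)) ((real n - m) / 2)" by simp
    then show ?thesis
      using isolation_potential_exp_le[of k n n] assms
      by (intro mult_left_mono diff_mono) (auto simp: r_def q_def)
  qed
  also have "\<dots> \<le> 24 * (real n / real k)"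
  proof -
    have "m = 4 * q + 3" "1 \<le> q" using assms by (simp_all add: m_def q_def)
    then show ?thesis unfolding q_def[symmetric] by (simp add: field_simps)
  qed
  finally show ?thesis .
qed

text \<open>The bound holds uniformly for \<open>2 \<le> k \<le> n\<close>.\<close>

theorem proposition1:
  fixes k :: "nat \<Rightarrow> nat"
  assumes "\<And>n. n \<ge> 2 \<Longrightarrow> 2 \<le> k n \<and> k n \<le> n"
    and "filterlim k at_top at_top"
  shows "(\<lambda>n. measure_pmf.expectation (drv n (k n) (n div 2)) (\<lambda>G. real (Dcount n 0 G)))
           \<in> O(\<lambda>n. real n / real (k n))"
proof (rule bigoI[where c=24])
  show "\<forall>\<^sub>F n in at_top. norm (measure_pmf.expectation (drv n (k n) (n div 2)) (\<lambda>G. real (Dcount n 0 G)))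
          \<le> 24 * norm (real n / real (k n))"
    using eventually_ge_at_top[of 2]
  proof eventually_elim
    case (elim n)
    have "0 \<le> measure_pmf.expectation (drv n (k n) (n div 2)) (\<lambda>G. real (Dcount n 0 G))"
      by simp
    then show ?case
      using expectation_Dcount_0_drv_half_le assms(1)[OF elim] by simp
  qed
qed

end
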